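(* Let $e^{i\theta(p)}=\frac{\sqrt{1-p^2}}{p}\left(\frac{\sqrt{2}\,p}{1+p}\sqrt{\frac{p}{1-p}}+\frac{p\,i}{1+p}\right)$ (a complex number of modulus one). Then the tuple $(e^{i\theta(p)}p,\sqrt{1-p^2})$ is simulable.
   Context: Let $p\in[0,1]$ be an unknown parameter and let $|p\rangle=\sqrt{p}|0\rangle+\sqrt{1-p}|1\rangle$. For a complex function $h(p)$ write $|f_h\rangle=\frac{1}{\sqrt{1+|h(p)|^2}}(h(p)|0\rangle+|1\rangle)$. A tuple $(k_0(p),k_1(p))$ of complex functions with $|k_0|^2+|k_1|^2=1$ is called simulable if, starting from an unbounded supply of copies of $|p\rangle$, one can produce the single-qubit state $|f_{k_0/k_1}\rangle=k_0(p)|0\rangle+k_1(p)|1\rangle$ (up to a global phase) in finitely many steps with nonzero success probability, where each step applies a unitary transformation or a measurement (in the computational basis) to the current state together with auxiliary qubits; the operations may not depend on $p$. Auxiliary qubits may be other simulable states or constant states $|a_c\rangle=\frac{1}{\sqrt{|a|^2+1}}(a|0\rangle+|1\rangle)$ with $a\in\mathbb{C}$ a constant independent of $p$. *)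

theory Defs
  imports "HOL-Analysis.Analysis"
begin

text \<open>A state of n qubits is a vector in C^(2^n), represented as a function
  nat \<Rightarrow> complex supported on indices below 2^n.  Basis index i of an
  (n+m)-qubit product state is i = j * 2^m + k (first factor = more significant
  qubits).\<close>

type_synonym qstate = "nat \<Rightarrow> complex"

definition qubit_p :: "real \<Rightarrow> qstate" where
  "qubit_p p = (\<lambda>i. if i = 0 then complex_of_real (sqrt p)
                    else if i = 1 then complex_of_real (sqrt (1 - p)) else 0)"

definition const_state :: "complex \<Rightarrow> qstate" where
  "const_state a = (\<lambda>i. if i = 0 then a / complex_of_real (sqrt (norm a ^ 2 + 1))
                    else if i = 1 then 1 / complex_of_real (sqrt (norm a ^ 2 + 1)) else 0)"

definition tensor :: "nat \<Rightarrow> qstate \<Rightarrow> qstate \<Rightarrow> qstate" where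
  "tensor m v w = (\<lambda>i. v (i div 2 ^ m) * w (i mod 2 ^ m))"

definition unitary_mat :: "nat \<Rightarrow> (nat \<Rightarrow> nat \<Rightarrow> complex) \<Rightarrow> bool" where
  "unitary_mat N U \<longleftrightarrow> (\<forall>i<N. \<forall>j<N.
      (\<Sum>k<N. cnj (U k i) * U k j) = (if i = j then 1 else 0))"

definition apply_mat :: "nat \<Rightarrow> (nat \<Rightarrow> nat \<Rightarrow> complex) \<Rightarrow> qstate \<Rightarrow> qstate" where
  "apply_mat N U v = (\<lambda>i. if i < N then (\<Sum>j<N. U i j * v j) else 0)"

text \<open>Unnormalised post-measurement vector: measure the last (least significant)
  qubit of an (n+1)-qubit state in the computational basis, keep outcome b, and
  discard the measured qubit.\<close>
definition meas_branch :: "nat \<Rightarrow> bool \<Rightarrow> qstate \<Rightarrow> qstate" where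
  "meas_branch n b v = (\<lambda>i. if i < 2 ^ n then v (2 * i + (if b then 1 else 0)) else 0)"

definition vnorm :: "nat \<Rightarrow> qstate \<Rightarrow> real" where
  "vnorm n v = sqrt (\<Sum>i<2 ^ n. (norm (v i))\<^sup>2)"

text \<open>The measured qubit is discarded; by applying swap
  unitaries any qubit can be brought to the last position.\<close>
inductive producible :: "nat \<Rightarrow> (real \<Rightarrow> qstate) \<Rightarrow> bool" where
  copy: "producible 1 qubit_p"
| const: "producible 1 (\<lambda>p. const_state a)"
| tens: "producible n \<psi> \<Longrightarrow> producible m \<phi> \<Longrightarrow>
           producible (n + m) (\<lambda>p. tensor m (\<psi> p) (\<phi> p))"
| unit: "producible n \<psi> \<Longrightarrow> unitary_mat (2 ^ n) U \<Longrightarrow>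
           producible n (\<lambda>p. apply_mat (2 ^ n) U (\<psi> p))"
| meas: "producible (Suc n) \<psi> \<Longrightarrow>
           (\<forall>p\<in>{0<..<1}. vnorm n (meas_branch n b (\<psi> p)) \<noteq> 0) \<Longrightarrow>
           producible n (\<lambda>p i. meas_branch n b (\<psi> p) i / complex_of_real (vnorm n (meas_branch n b (\<psi> p))))"

definition simulable :: "(real \<Rightarrow> complex) \<Rightarrow> (real \<Rightarrow> complex) \<Rightarrow> bool" where
  "simulable k0 k1 \<longleftrightarrow> (\<exists>\<psi>. producible 1 \<psi> \<and>
     (\<forall>p\<in>{0<..<1}. \<exists>c. norm c = 1 \<and> \<psi> p 0 = c * k0 p \<and> \<psi> p 1 = c * k1 p))"

end

theory Submission
  imports Defs
begin

(* Three copies of |p> have amplitudes p sqrt p at |000>, p sqrt (1 - p) at |001>, |010>, |100>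
   and (1 - p) sqrt (1 - p) at |111>.  A p-independent unitary puts
   (p / sqrt 3) (sqrt 2 sqrt p + i sqrt (1 - p)) on |000> and
   (2 p sqrt (1 - p) + (1 - p) sqrt (1 - p)) / sqrt 3 = (1 + p) sqrt (1 - p) / sqrt 3 on |100>.
   Postselecting the last two qubits on |00> leaves the first qubit in the normalised state with
   these two amplitudes, which are e^(i theta) p and sqrt (1 - p^2) times the common factor
   sqrt ((1 + p) / 3). *)

definition normalize_state :: "nat \<Rightarrow> qstate \<Rightarrow> qstate" where
  "normalize_state n v = (\<lambda>i. v i / complex_of_real (vnorm n v))"

lemma producible_meas_normalize_state:
  assumes "producible (Suc n) \<psi>" and "\<forall>p\<in>{0<..<1}. vnorm n (meas_branch n b (\<psi> p)) \<noteq> 0"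
  shows "producible n (\<lambda>p. normalize_state n (meas_branch n b (\<psi> p)))"
  unfolding normalize_state_def using producible.meas[OF assms] .

lemma vnorm_eq_0_iff: "vnorm n v = 0 \<longleftrightarrow> (\<forall>i<2 ^ n. v i = 0)"
  unfolding vnorm_def by (auto simp: sum_nonneg_eq_0_iff)

lemma vnorm_nonneg: "vnorm n v \<ge> 0"
  unfolding vnorm_def by (simp add: sum_nonneg)

lemma vnorm_divide: "vnorm n (\<lambda>i. v i / complex_of_real r) = vnorm n v / \<bar>r\<bar>"
  unfolding vnorm_def
  by (simp add: norm_divide power_divide sum_divide_distrib[symmetric] real_sqrt_divide)

lemma meas_branch_divide: "meas_branch n b (\<lambda>i. v i / c) = (\<lambda>i. meas_branch n b v i / c)"
  unfolding meas_branch_def by auto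

lemma normalize_state_divide:
  assumes "r > 0" shows "normalize_state n (\<lambda>i. v i / complex_of_real r) = normalize_state n v"
  using assms unfolding normalize_state_def vnorm_divide by auto

lemma vnorm_meas_branch_normalize_state:
  "vnorm n (meas_branch n b (normalize_state (Suc n) v)) = vnorm n (meas_branch n b v) / vnorm (Suc n) v"
  unfolding normalize_state_def meas_branch_divide vnorm_divide by (simp add: vnorm_nonneg)

lemma meas_branch_eq_0_if_vnorm_eq_0:
  assumes "vnorm (Suc n) v = 0"
  shows "meas_branch n b v = (\<lambda>i. 0)"
  using assms by (auto simp: vnorm_eq_0_iff meas_branch_def)

lemma normalize_state_meas_branch_normalize_state:
  "normalize_state n (meas_branch n b (normalize_state (Suc n) v)) = normalize_state n (meas_branch n b v)"
proof (cases "vnorm (Suc n) v = 0")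
  case True
  with meas_branch_eq_0_if_vnorm_eq_0[OF True] show ?thesis by (simp add: normalize_state_def meas_branch_def)
next
  case False
  then have "vnorm (Suc n) v > 0" using vnorm_nonneg by (metis order_le_neq_trans)
  then show ?thesis unfolding normalize_state_def[of "Suc n"] meas_branch_divide by (rule normalize_state_divide)
qed

lemma producible_meas_meas_normalize_state:
  assumes "producible (Suc (Suc n)) \<Psi>"
    and "\<forall>p\<in>{0<..<1}. vnorm n (meas_branch n b (meas_branch (Suc n) b' (\<Psi> p))) \<noteq> 0"
  shows "producible n (\<lambda>p. normalize_state n (meas_branch n b (meas_branch (Suc n) b' (\<Psi> p))))"
proof -
  have first: "vnorm (Suc n) (meas_branch (Suc n) b' (\<Psi> p)) \<noteq> 0" if "p \<in> {0<..<1}" for p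
    using assms(2) that meas_branch_eq_0_if_vnorm_eq_0 by (fastforce simp: vnorm_def)
  have "producible (Suc n) (\<lambda>p. normalize_state (Suc n) (meas_branch (Suc n) b' (\<Psi> p)))"
    using producible_meas_normalize_state[OF assms(1)] first by blast
  then have "producible n
      (\<lambda>p. normalize_state n (meas_branch n b (normalize_state (Suc n) (meas_branch (Suc n) b' (\<Psi> p)))))"
    by (rule producible_meas_normalize_state)
      (use assms(2) first in \<open>simp add: vnorm_meas_branch_normalize_state\<close>)
  then show ?thesis unfolding normalize_state_meas_branch_normalize_state .
qed

lemma normalize_state_qubit:
  assumes "c > 0" and "(norm k0)\<^sup>2 + (norm k1)\<^sup>2 = 1"
    and "v 0 = complex_of_real c * k0" and "v 1 = complex_of_real c * k1"
  shows "normalize_state 1 v 0 = k0" "normalize_state 1 v 1 = k1"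
proof -
  have "(\<Sum>i<2 ^ 1. (norm (v i))\<^sup>2) = c\<^sup>2 * ((norm k0)\<^sup>2 + (norm k1)\<^sup>2)"
    using assms(3,4) by (simp add: numeral_2_eq_2 norm_mult power_mult_distrib algebra_simps)
  then have "vnorm 1 v = c"
    using assms by (simp add: vnorm_def)
  then show "normalize_state 1 v 0 = k0" "normalize_state 1 v 1 = k1"
    using assms by (simp_all add: normalize_state_def)
qed

definition phase_factor :: "real \<Rightarrow> complex" where
  "phase_factor p = complex_of_real (sqrt (1 - p\<^sup>2) / p) *
      (complex_of_real (sqrt 2 * p / (1 + p) * sqrt (p / (1 - p))) + complex_of_real (p / (1 + p)) * \<i>)"

lemma phase_factor_times:
  fixes p :: real
  assumes "0 < p" "p < 1"
  shows "phase_factor p * complex_of_real p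
    = complex_of_real (p / sqrt (1 + p)) * (complex_of_real (sqrt 2 * sqrt p) + \<i> * complex_of_real (sqrt (1 - p)))"
proof -
  define q where "q = sqrt (1 + p)"
  have q: "1 + p = q * q" "q > 0" using assms by (simp_all add: q_def)
  have sq: "sqrt (1 - p\<^sup>2) = sqrt (1 - p) * q"
    by (simp add: q_def real_sqrt_mult[symmetric] power2_eq_square algebra_simps)
  have "sqrt (1 - p) > 0" using assms by simp
  then show ?thesis
    using assms q(2) unfolding phase_factor_def sq real_sqrt_divide q_def[symmetric] q(1)
    by (simp add: complex_eq_iff field_simps)
qed

lemma norm_phase_factor:
  fixes p :: real
  assumes "0 < p" "p < 1"
  shows "norm (phase_factor p) = 1"
proof -
  have "norm (complex_of_real (sqrt 2 * sqrt p) + \<i> * complex_of_real (sqrt (1 - p))) = sqrt (1 + p)"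
    using assms by (simp add: Complex_eq[symmetric] cmod_def power_mult_distrib)
  then have "norm (phase_factor p * complex_of_real p) = p"
    using assms unfolding phase_factor_times[OF assms] by (simp only: norm_mult norm_of_real) simp
  then show ?thesis using assms by (simp add: norm_mult power_mult_distrib)
qed

lemma of_real_sqrt_mult_self [simp]:
  "x \<ge> 0 \<Longrightarrow> complex_of_real (sqrt x) * complex_of_real (sqrt x) = complex_of_real x"
  by (simp flip: of_real_mult)

(* Rows 0 and 1 rotate within span {|000>, |001>}; row 4 sums the amplitudes of |010>, |100>, |111>,
   and rows 2 and 7 complete it to an orthonormal basis of their span. *)
definition mixing_unitary :: "nat \<Rightarrow> nat \<Rightarrow> complex" where
  "mixing_unitary i j =
    (let a = complex_of_real (sqrt (1/3)); b = complex_of_real (sqrt (2/3));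
         c = complex_of_real (sqrt (1/2)); d = complex_of_real (sqrt (1/6)) in
     [[b, \<i> * a, 0, 0, 0, 0, 0, 0],
      [\<i> * a, b, 0, 0, 0, 0, 0, 0],
      [0, 0, c, 0, - c, 0, 0, 0],
      [0, 0, 0, 1, 0, 0, 0, 0],
      [0, 0, a, 0, a, 0, 0, a],
      [0, 0, 0, 0, 0, 1, 0, 0],
      [0, 0, 0, 0, 0, 0, 1, 0],
      [0, 0, d, 0, d, 0, 0, - 2 * d]] ! i ! j)"

lemma unitary_mixing_unitary: "unitary_mat (2 ^ 3) mixing_unitary"
  unfolding unitary_mat_def mixing_unitary_def Let_def
  by (simp add: numeral_eq_Suc lessThan_Suc less_Suc_eq) (simp add: algebra_simps)

definition three_copies :: "real \<Rightarrow> qstate" where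
  "three_copies p = tensor 1 (tensor 1 (qubit_p p) (qubit_p p)) (qubit_p p)"

lemma producible_three_copies: "producible 3 three_copies"
proof -
  have "producible (1 + 1 + 1) three_copies"
    unfolding three_copies_def by (intro producible.tens producible.copy)
  then show ?thesis by (simp add: numeral_3_eq_3)
qed

definition mixed_state :: "real \<Rightarrow> qstate" where
  "mixed_state p = apply_mat (2 ^ 3) mixing_unitary (three_copies p)"

lemma producible_mixed_state: "producible 3 mixed_state"
  unfolding mixed_state_def by (rule producible.unit[OF producible_three_copies unitary_mixing_unitary])

lemma sum_lessThan_8: "(\<Sum>j<(2::nat) ^ 3. f j) = f 0 + f 1 + f 2 + f 3 + f 4 + f 5 + f 6 + (f 7 :: complex)"
  by (simp add: eval_nat_numeral)

lemma mixed_state_0: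
  assumes "0 \<le> p"
  shows "mixed_state p 0 =
    complex_of_real (p / sqrt 3) * (complex_of_real (sqrt 2 * sqrt p) + \<i> * complex_of_real (sqrt (1 - p)))"
proof -
  have "mixed_state p 0 =
      complex_of_real (sqrt (2/3)) * (complex_of_real (sqrt p) * complex_of_real (sqrt p) * complex_of_real (sqrt p))
    + \<i> * complex_of_real (sqrt (1/3)) * (complex_of_real (sqrt p) * complex_of_real (sqrt p) * complex_of_real (sqrt (1 - p)))"
    unfolding mixed_state_def apply_mat_def sum_lessThan_8
    by (simp add: three_copies_def tensor_def qubit_p_def mixing_unitary_def)
  also have "\<dots> = complex_of_real (p / sqrt 3) * (complex_of_real (sqrt 2 * sqrt p) + \<i> * complex_of_real (sqrt (1 - p)))"
    using assms by (simp add: complex_eq_iff real_sqrt_divide)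
  finally show ?thesis .
qed

lemma mixed_state_4:
  assumes "0 \<le> p" "p \<le> 1"
  shows "mixed_state p 4 = complex_of_real ((1 + p) / sqrt 3 * sqrt (1 - p))"
proof -
  have "mixed_state p 4 = complex_of_real (sqrt (1/3)) *
      (complex_of_real (sqrt p) * complex_of_real (sqrt (1 - p)) * complex_of_real (sqrt p)
     + complex_of_real (sqrt (1 - p)) * complex_of_real (sqrt p) * complex_of_real (sqrt p)
     + complex_of_real (sqrt (1 - p)) * complex_of_real (sqrt (1 - p)) * complex_of_real (sqrt (1 - p)))"
    unfolding mixed_state_def apply_mat_def sum_lessThan_8
    by (simp add: three_copies_def tensor_def qubit_p_def mixing_unitary_def distrib_left)
  also have "\<dots> = complex_of_real ((1 + p) / sqrt 3 * sqrt (1 - p))"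
    using assms by (simp add: complex_eq_iff real_sqrt_divide algebra_simps add_divide_distrib)
  finally show ?thesis .
qed

lemma mixed_state_postselected:
  assumes "0 < p" "p < 1"
  shows "mixed_state p 0 = complex_of_real (sqrt ((1 + p) / 3)) * (phase_factor p * complex_of_real p)"
    and "mixed_state p 4 = complex_of_real (sqrt ((1 + p) / 3)) * complex_of_real (sqrt (1 - p\<^sup>2))"
proof -
  define q where "q = sqrt (1 + p)"
  have q: "1 + p = q * q" "q > 0" using assms by (simp_all add: q_def)
  have p: "0 \<le> p" "p \<le> 1" using assms by simp_all
  have "sqrt (1 - p\<^sup>2) = sqrt (1 - p) * q"
    by (simp add: q_def real_sqrt_mult[symmetric] power2_eq_square algebra_simps)
  then show "mixed_state p 0 = complex_of_real (sqrt ((1 + p) / 3)) * (phase_factor p * complex_of_real p)"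
    and "mixed_state p 4 = complex_of_real (sqrt ((1 + p) / 3)) * complex_of_real (sqrt (1 - p\<^sup>2))"
    using assms q unfolding mixed_state_0[OF p(1)] mixed_state_4[OF p] phase_factor_times[OF assms]
      real_sqrt_divide q_def[symmetric]
    by (simp_all flip: of_real_mult add: field_simps)
qed

definition output_state :: "real \<Rightarrow> qstate" where
  "output_state p = normalize_state 1 (meas_branch 1 False (meas_branch 2 False (mixed_state p)))"

lemma meas_branch_meas_branch_False:
  "meas_branch 1 False (meas_branch 2 False v) 0 = v 0"
  "meas_branch 1 False (meas_branch 2 False v) 1 = v 4"
  by (simp_all add: meas_branch_def)

lemma producible_output_state: "producible 1 output_state"
proof -
  have "mixed_state p 4 \<noteq> 0" if "p \<in> {0<..<1}" for p
    using that abs_square_less_1[of p] by (simp add: mixed_state_postselected)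
  then have "\<forall>p\<in>{0<..<1}. vnorm 1 (meas_branch 1 False (meas_branch 2 False (mixed_state p))) \<noteq> 0"
    using meas_branch_meas_branch_False(2) by (auto simp: vnorm_eq_0_iff intro!: exI[of _ 1])
  moreover have "producible (Suc (Suc 1)) mixed_state"
    using producible_mixed_state by (simp add: numeral_3_eq_3)
  ultimately show ?thesis
    unfolding output_state_def using producible_meas_meas_normalize_state[of 1] by (simp only: Suc_1)
qed

lemma output_state_amplitudes:
  assumes "0 < p" "p < 1"
  shows "output_state p 0 = phase_factor p * complex_of_real p"
    and "output_state p 1 = complex_of_real (sqrt (1 - p\<^sup>2))"
proof -
  have unit: "(norm (phase_factor p * complex_of_real p))\<^sup>2 + (norm (complex_of_real (sqrt (1 - p\<^sup>2))))\<^sup>2 = 1"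
    using assms by (simp add: norm_mult norm_phase_factor power_le_one)
  have pos: "sqrt ((1 + p) / 3) > 0" using assms by simp
  show "output_state p 0 = phase_factor p * complex_of_real p"
    and "output_state p 1 = complex_of_real (sqrt (1 - p\<^sup>2))"
    unfolding output_state_def
    using normalize_state_qubit[OF pos unit] meas_branch_meas_branch_False mixed_state_postselected[OF assms]
    by simp_all
qed

theorem mainTheorem4:
  fixes eth :: "real \<Rightarrow> complex"
  defines "eth \<equiv> (\<lambda>p. complex_of_real (sqrt (1 - p\<^sup>2) / p) *
      (complex_of_real (sqrt 2 * p / (1 + p) * sqrt (p / (1 - p))) + complex_of_real (p / (1 + p)) * \<i>))"
  shows "simulable (\<lambda>p. eth p * complex_of_real p) (\<lambda>p. complex_of_real (sqrt (1 - p\<^sup>2)))"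
proof -
  have "eth = phase_factor" by (simp add: eth_def phase_factor_def fun_eq_iff)
  then show ?thesis
    unfolding simulable_def using producible_output_state output_state_amplitudes
    by (intro exI[of _ output_state] conjI ballI exI[of _ 1]) simp_all
qed

end
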